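(* If $w \in A^*$ is arbitrary, then the clean overlap prefix of $w$, if any, can be found in time linear in the length of $w$.
   Context: Let $\mathcal{P}=\langle A \mid R\rangle$ be a fixed finite monoid presentation satisfying the small overlap condition $C(4)$: no relation word (a word on either side of a relation in $R$) can be written as a product of fewer than 4 pieces, where a piece is a word that is a factor of at least two distinct relation words, or occurs more than once (possibly overlapping) as a factor of a single relation word. Every relation word $u$ factors as $u=X_uY_uZ_u$, where $X_u$ is the longest prefix of $u$ that is a piece, $Z_u$ is the longest suffix of $u$ that is a piece, and $Y_u$ is the middle word. Let $M$ denote the number of distinct relation words and $\delta$ the length of the longest relation word. A relation prefix of $w$ is a prefix of the form $aXY$ with $a\in A^*$ and $X,Y$ the maximal piece prefix and middle word of some relation word. A relation prefix $bX_1Y_1'\cdots X_{n-1}Y_{n-1}'X_nY_n$ ($n\ge 1$) is an overlap prefix if each $Y_i'$ is a proper non-empty prefix of the middle word $Y_i$ of some relation word $X_iY_iZ_i$, and no factor of the form $X_0Y_0$ (maximal piece prefix followed by middle word of a relation word) begins before the end of $b$. A relation prefix $aXY$ of $w$ is clean if $w$ has no prefix of the form $aXY'X_0Y_0$ with $Y'$ a proper prefix of $Y$; a clean overlap prefix is an overlap prefix that is also clean. The presentation is fixed, so constants depending on $M$ and $\delta$ are ignored in the complexity. *)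

theory Defs
  imports Main "HOL-Library.Sublist"
begin

definition rel_words :: "('a list \<times> 'a list) set \<Rightarrow> 'a list set" where
  "rel_words R = fst ` R \<union> snd ` R"

definition occurrences :: "'a list \<Rightarrow> 'a list \<Rightarrow> nat set" where
  "occurrences p u = {i. i + length p \<le> length u \<and> take (length p) (drop i u) = p}"

definition piece :: "('a list \<times> 'a list) set \<Rightarrow> 'a list \<Rightarrow> bool" where
  "piece R p \<longleftrightarrow>
     (\<exists>u\<in>rel_words R. \<exists>v\<in>rel_words R. u \<noteq> v \<and> sublist p u \<and> sublist p v)
   \<or> (\<exists>u\<in>rel_words R. 2 \<le> card (occurrences p u))"

definition C4 :: "('a list \<times> 'a list) set \<Rightarrow> bool" where
  "C4 R \<longleftrightarrow> (\<forall>u\<in>rel_words R. \<not> (\<exists>ps. length ps < 4 \<and> (\<forall>p\<in>set ps. piece R p) \<and> concat ps = u))"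

definition presentation :: "'a set \<Rightarrow> ('a list \<times> 'a list) set \<Rightarrow> bool" where
  "presentation A R \<longleftrightarrow> finite A \<and> finite R \<and> R \<subseteq> lists A \<times> lists A"

definition Xp :: "('a list \<times> 'a list) set \<Rightarrow> 'a list \<Rightarrow> 'a list" where
  "Xp R u = take (GREATEST k. k \<le> length u \<and> piece R (take k u)) u"

definition Zp :: "('a list \<times> 'a list) set \<Rightarrow> 'a list \<Rightarrow> 'a list" where
  "Zp R u = drop (length u - (GREATEST k. k \<le> length u \<and> piece R (drop (length u - k) u))) u"

definition Yp :: "('a list \<times> 'a list) set \<Rightarrow> 'a list \<Rightarrow> 'a list" where
  "Yp R u = take (length u - length (Zp R u) - length (Xp R u)) (drop (length (Xp R u)) u)"

definition clean_rel_prefix :: "('a list \<times> 'a list) set \<Rightarrow> 'a list \<Rightarrow> 'a list \<Rightarrow> 'a list \<Rightarrow> bool" where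
  "clean_rel_prefix R w a u \<longleftrightarrow>
     u \<in> rel_words R \<and> prefix (a @ Xp R u @ Yp R u) w \<and>
     \<not> (\<exists>Y' u0. strict_prefix Y' (Yp R u) \<and> u0 \<in> rel_words R \<and>
               prefix (a @ Xp R u @ Y' @ Xp R u0 @ Yp R u0) w)"

text \<open>A decomposition b X_1 Y_1' ... X_{n-1} Y_{n-1}' X_n Y_n of the prefix p of w, with
  us = [u_1,...,u_n] the relation words and ys = [Y_1',...,Y_{n-1}'].\<close>
definition overlap_decomp ::
  "('a list \<times> 'a list) set \<Rightarrow> 'a list \<Rightarrow> 'a list \<Rightarrow> 'a list \<Rightarrow> 'a list list \<Rightarrow> 'a list list \<Rightarrow> bool" where
  "overlap_decomp R w p b us ys \<longleftrightarrow>
     prefix p w \<and> 1 \<le> length us \<and> length ys = length us - 1 \<and>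
     set us \<subseteq> rel_words R \<and>
     (\<forall>i < length ys. ys ! i \<noteq> [] \<and> strict_prefix (ys ! i) (Yp R (us ! i))) \<and>
     p = b @ concat (map (\<lambda>i. Xp R (us ! i) @ ys ! i) [0..<length ys])
           @ Xp R (last us) @ Yp R (last us) \<and>
     \<not> (\<exists>i u0. i < length b \<and> u0 \<in> rel_words R \<and>
              take (length (Xp R u0 @ Yp R u0)) (drop i w) = Xp R u0 @ Yp R u0)"

definition overlap_prefix :: "('a list \<times> 'a list) set \<Rightarrow> 'a list \<Rightarrow> 'a list \<Rightarrow> bool" where
  "overlap_prefix R w p \<longleftrightarrow> (\<exists>b us ys. overlap_decomp R w p b us ys)"

definition clean_overlap_prefix :: "('a list \<times> 'a list) set \<Rightarrow> 'a list \<Rightarrow> 'a list \<Rightarrow> bool" where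
  "clean_overlap_prefix R w p \<longleftrightarrow>
     (\<exists>b us ys. overlap_decomp R w p b us ys \<and>
        clean_rel_prefix R w (b @ concat (map (\<lambda>i. Xp R (us ! i) @ ys ! i) [0..<length ys])) (last us))"

text \<open>Registers are indexed by naturals and hold naturals (unit cost). The input word is
  read-only; ReadIn r s sets register r to (code of letter number (reg s)) + 1, or 0 if
  reg s is beyond the end of the input.\<close>

datatype instr =
    LoadConst nat nat
  | Add nat nat nat
  | Sub nat nat nat
  | ReadIn nat nat
  | Load nat nat
  | Store nat nat
  | JumpZ nat nat
  | Halt

type_synonym config = "nat \<times> (nat \<Rightarrow> nat)"

definition halted :: "instr list \<Rightarrow> config \<Rightarrow> bool" where
  "halted P c \<longleftrightarrow> fst c \<ge> length P \<or> P ! fst c = Halt"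

fun exec :: "nat list \<Rightarrow> instr \<Rightarrow> config \<Rightarrow> config" where
  "exec inp (LoadConst r k) (pc, g) = (Suc pc, g(r := k))"
| "exec inp (Add r s t) (pc, g) = (Suc pc, g(r := g s + g t))"
| "exec inp (Sub r s t) (pc, g) = (Suc pc, g(r := g s - g t))"
| "exec inp (ReadIn r s) (pc, g) =
     (Suc pc, g(r := (if g s < length inp then inp ! g s + 1 else 0)))"
| "exec inp (Load r s) (pc, g) = (Suc pc, g(r := g (g s)))"
| "exec inp (Store r s) (pc, g) = (Suc pc, g(g r := g s))"
| "exec inp (JumpZ r tgt) (pc, g) = (if g r = 0 then tgt else Suc pc, g)"
| "exec inp Halt (pc, g) = (pc, g)"

definition step :: "instr list \<Rightarrow> nat list \<Rightarrow> config \<Rightarrow> config" where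
  "step P inp c = (if halted P c then c else exec inp (P ! fst c) c)"

definition run :: "instr list \<Rightarrow> nat list \<Rightarrow> nat \<Rightarrow> config" where
  "run P inp t = (step P inp ^^ t) (0, \<lambda>_. 0)"

definition output_ok :: "('a list \<times> 'a list) set \<Rightarrow> 'a list \<Rightarrow> nat \<Rightarrow> bool" where
  "output_ok R w out \<longleftrightarrow>
     (if (\<exists>p. clean_overlap_prefix R w p)
      then (\<exists>k. out = Suc k \<and> k \<le> length w \<and> clean_overlap_prefix R w (take k w))
      else out = 0)"

end

theory Submission
  imports Defs
begin

text \<open>Let \<open>L\<close> exceed the length of every word \<open>X\<^sub>u Y\<^sub>u\<close>. The prefix of \<open>w\<close> of length \<open>k\<close>
  is a clean overlap prefix iff \<open>k\<close> is a clean overlap end: some \<open>X\<^sub>u Y\<^sub>u\<close> ending at \<open>k\<close>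
  starts at an admissible position, and no factor \<open>X\<^sub>0 Y\<^sub>0\<close> starts inside its \<open>Y\<^sub>u\<close>; the
  admissible positions have an inductive description. Both notions look at most \<open>L\<close> letters
  ahead, and beyond a prefix \<open>x\<close> the admissible positions only depend on the last \<open>2L\<close> letters
  of \<open>x\<close>, on whether \<open>x\<close> has a factor \<open>X\<^sub>0 Y\<^sub>0\<close> before them, and on which of the first \<open>L\<close>
  positions of that window are admissible. Hence the map sending \<open>w\<close> to its clean overlap ends
  among its last \<open>L\<close> positions has finitely many residuals, i.e. it is computed by a finite
  automaton. A random access machine runs the automaton in linear time from a transition table
  in memory; it stops at the first \<open>m\<close> for which \<open>m - L\<close> is a clean overlap end, and otherwise
  reports a clean overlap end among the last \<open>L\<close> positions of \<open>w\<close>.\<close>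

lemma prefix_append_iff_take_drop:
  "prefix (xs @ ys) w \<longleftrightarrow> prefix xs w \<and> take (length ys) (drop (length xs) w) = ys"
  by (auto simp: prefix_def) (metis append_assoc append_take_drop_id)

lemma take_drop_eq_if_take_eq:
  "take n w = take n w' \<Longrightarrow> i + l \<le> n \<Longrightarrow> take l (drop i w) = take l (drop i w')"
  by (metis min.absorb1 take_drop take_take add.commute)

lemma take_drop_add_eq_if_drop_eq:
  "drop p w = drop p' w' \<Longrightarrow> take l (drop (p + s) w) = take l (drop (p' + s) w')"
  by (metis add.commute drop_drop)

lemma prefix_take_length: "prefix xs ys \<Longrightarrow> take (length xs) ys = xs"
  by (auto simp: prefix_def)

lemma nonempty_strict_prefix_iff_take:
  "y \<noteq> [] \<and> strict_prefix y Y \<longleftrightarrow> (\<exists>j. 0 < j \<and> j < length Y \<and> y = take j Y)"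
proof
  assume y: "y \<noteq> [] \<and> strict_prefix y Y"
  then have "take (length y) Y = y"
    by (metis append_eq_conv_conj prefix_def prefix_order.less_imp_le)
  then show "\<exists>j. 0 < j \<and> j < length Y \<and> y = take j Y"
    using y prefix_length_less by (intro exI[of _ "length y"]) auto
next
  assume "\<exists>j. 0 < j \<and> j < length Y \<and> y = take j Y"
  then obtain j where "0 < j" "j < length Y" "y = take j Y" by blast
  then show "y \<noteq> [] \<and> strict_prefix y Y"
    by (auto simp: take_is_prefix prefix_order.less_le)
qed

definition residual :: "('a list \<Rightarrow> 'b) \<Rightarrow> 'a list \<Rightarrow> 'a list \<Rightarrow> 'b" where
  "residual g x = (\<lambda>z. g (x @ z))"

lemma residual_snoc: "residual g (x @ [a]) = (\<lambda>z. residual g x (a # z))"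
  by (simp add: residual_def)

lemma finite_image_if_factors:
  assumes "finite (f ` S)" and "\<And>x y. x \<in> S \<Longrightarrow> y \<in> S \<Longrightarrow> f x = f y \<Longrightarrow> h x = h y"
  shows "finite (h ` S)"
proof -
  define pick where "pick v = (SOME x. x \<in> S \<and> f x = v)" for v
  have "h (pick (f x)) = h x" if "x \<in> S" for x
  proof -
    have "pick (f x) \<in> S \<and> f (pick (f x)) = f x"
      unfolding pick_def by (rule someI[where P = "\<lambda>y. y \<in> S \<and> f y = f x" and x = x]) (simp add: that)
    then show ?thesis using assms(2)[OF _ that] by blast
  qed
  then have "h ` S = (h \<circ> pick) ` f ` S"
    unfolding image_comp by (intro image_cong) simp_all
  then show ?thesis using assms(1) by (metis finite_imageI)
qed

context
  fixes R :: "('a list \<times> 'a list) set"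
begin

section \<open>Overlap stems and clean overlap ends\<close>

abbreviation xy :: "'a list \<Rightarrow> 'a list" where
  "xy u \<equiv> Xp R u @ Yp R u"

definition xy_factor_at :: "'a list \<Rightarrow> nat \<Rightarrow> bool" where
  "xy_factor_at w i \<longleftrightarrow> (\<exists>u\<in>rel_words R. take (length (xy u)) (drop i w) = xy u)"

text \<open>\<open>overlap_stem w q\<close>: the prefix of length \<open>q\<close> of \<open>w\<close> has the shape
  \<open>b X\<^sub>1 Y\<^sub>1' \<dots> X\<^sub>k Y\<^sub>k'\<close> (\<open>k \<ge> 0\<close>) of an overlap prefix with its last factor
  \<open>X\<^sub>n Y\<^sub>n\<close> removed.\<close>

inductive overlap_stem :: "'a list \<Rightarrow> nat \<Rightarrow> bool" for w where
  stem_start: "q \<le> length w \<Longrightarrow> (\<forall>i<q. \<not> xy_factor_at w i) \<Longrightarrow> overlap_stem w q"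
| stem_extend: "overlap_stem w q \<Longrightarrow> u \<in> rel_words R \<Longrightarrow> 0 < j \<Longrightarrow> j < length (Yp R u) \<Longrightarrow>
    take (length (Xp R u) + j) (drop q w) = Xp R u @ take j (Yp R u) \<Longrightarrow>
    overlap_stem w (q + length (Xp R u) + j)"

definition clean_overlap_end :: "'a list \<Rightarrow> nat \<Rightarrow> bool" where
  "clean_overlap_end w k \<longleftrightarrow> (\<exists>q u. overlap_stem w q \<and> u \<in> rel_words R \<and>
     take (length (xy u)) (drop q w) = xy u \<and> k = q + length (xy u) \<and>
     (\<forall>j<length (Yp R u). \<not> xy_factor_at w (q + length (Xp R u) + j)))"

definition overlap_chain :: "'a list list \<Rightarrow> 'a list list \<Rightarrow> 'a list" where
  "overlap_chain us ys = concat (map (\<lambda>i. Xp R (us ! i) @ ys ! i) [0..<length ys])"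

definition stem_decomp :: "'a list \<Rightarrow> 'a list \<Rightarrow> 'a list list \<Rightarrow> 'a list list \<Rightarrow> bool" where
  "stem_decomp w b us ys \<longleftrightarrow> length us = length ys \<and> set us \<subseteq> rel_words R \<and>
     (\<forall>i<length ys. ys ! i \<noteq> [] \<and> strict_prefix (ys ! i) (Yp R (us ! i))) \<and>
     prefix (b @ overlap_chain us ys) w \<and> (\<forall>i<length b. \<not> xy_factor_at w i)"

lemma overlap_chain_Nil [simp]: "overlap_chain us [] = []"
  by (simp add: overlap_chain_def)

lemma overlap_chain_snoc:
  assumes "length us = length ys"
  shows "overlap_chain (us @ [u]) (ys @ [y]) = overlap_chain us ys @ Xp R u @ y"
proof -
  have map_eq: "map (\<lambda>i. Xp R ((us @ [u]) ! i) @ (ys @ [y]) ! i) [0..<length ys] =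
        map (\<lambda>i. Xp R (us ! i) @ ys ! i) [0..<length ys]"
    by (rule map_cong) (auto simp: nth_append assms)
  have "(us @ [u]) ! length ys = u" "(ys @ [y]) ! length ys = y"
    using assms by (simp_all add: nth_append)
  then show ?thesis
    by (simp add: overlap_chain_def map_eq del: nth_append)
qed

lemma overlap_chain_append_words:
  "length ys \<le> length us \<Longrightarrow> overlap_chain (us @ vs) ys = overlap_chain us ys"
  unfolding overlap_chain_def by (rule arg_cong[where f = concat], rule map_cong) (auto simp: nth_append)

lemma stem_decomp_Nil: "stem_decomp w b [] [] \<longleftrightarrow> prefix b w \<and> (\<forall>i<length b. \<not> xy_factor_at w i)"
  by (simp add: stem_decomp_def)

lemma stem_decomp_snoc:
  assumes "length us = length ys"
  shows "stem_decomp w b (us @ [u]) (ys @ [y]) \<longleftrightarrow> stem_decomp w b us ys \<and> u \<in> rel_words R \<and>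
    y \<noteq> [] \<and> strict_prefix y (Yp R u) \<and> prefix (b @ overlap_chain us ys @ Xp R u @ y) w"
proof -
  have "(\<forall>i<Suc (length ys). (ys @ [y]) ! i \<noteq> [] \<and> strict_prefix ((ys @ [y]) ! i) (Yp R ((us @ [u]) ! i)))
     \<longleftrightarrow> (\<forall>i<length ys. ys ! i \<noteq> [] \<and> strict_prefix (ys ! i) (Yp R (us ! i))) \<and>
         y \<noteq> [] \<and> strict_prefix y (Yp R u)"
    using assms by (auto simp: nth_append less_Suc_eq)
  moreover have "prefix (b @ overlap_chain us ys @ Xp R u @ y) w \<Longrightarrow> prefix (b @ overlap_chain us ys) w"
    by (metis append_assoc prefixI prefix_order.trans)
  ultimately show ?thesis
    using assms by (auto simp: stem_decomp_def overlap_chain_snoc)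
qed

lemma overlap_stem_imp_decomp:
  "overlap_stem w q \<Longrightarrow> \<exists>b us ys. stem_decomp w b us ys \<and> length (b @ overlap_chain us ys) = q"
proof (induction rule: overlap_stem.induct)
  case (stem_start q)
  then have "stem_decomp w (take q w) [] []"
    by (simp add: stem_decomp_Nil take_is_prefix)
  then show ?case using stem_start(1) by force
next
  case (stem_extend q u j)
  then obtain b us ys where d: "stem_decomp w b us ys" "length (b @ overlap_chain us ys) = q"
    by blast
  let ?y = "take j (Yp R u)"
  have "?y \<noteq> [] \<and> strict_prefix ?y (Yp R u)"
    using stem_extend.hyps(3,4) nonempty_strict_prefix_iff_take by blast
  moreover have "prefix (b @ overlap_chain us ys @ Xp R u @ ?y) w"
    using d stem_extend.hyps(5) prefix_append_iff_take_drop[of "b @ overlap_chain us ys" "Xp R u @ ?y" w]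
    by (simp add: stem_decomp_def stem_extend.hyps(4))
  moreover have len: "length us = length ys"
    using d(1) by (simp add: stem_decomp_def)
  ultimately have "stem_decomp w b (us @ [u]) (ys @ [?y])"
    using d(1) stem_extend.hyps(2) by (simp add: stem_decomp_snoc)
  moreover have "length (b @ overlap_chain (us @ [u]) (ys @ [?y])) = q + length (Xp R u) + j"
    using d(2) stem_extend.hyps(4) by (simp add: overlap_chain_snoc len)
  ultimately show ?case by blast
qed

lemma stem_decomp_imp_overlap_stem:
  "stem_decomp w b us ys \<Longrightarrow> overlap_stem w (length (b @ overlap_chain us ys))"
proof (induction us ys rule: rev_induct2)
  case 1
  then show ?case
    by (auto simp: stem_decomp_Nil intro!: stem_start dest: prefix_length_le)
next
  case (4 u us y ys)
  then have len: "length us = length ys" by (simp add: stem_decomp_def)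
  let ?q = "length (b @ overlap_chain us ys)"
  have d: "stem_decomp w b us ys" "u \<in> rel_words R" "y \<noteq> [] \<and> strict_prefix y (Yp R u)"
    "prefix ((b @ overlap_chain us ys) @ Xp R u @ y) w"
    using "4.prems" by (simp_all add: stem_decomp_snoc len)
  obtain j where j: "0 < j" "j < length (Yp R u)" "y = take j (Yp R u)"
    using d(3) nonempty_strict_prefix_iff_take by blast
  have "take (length (Xp R u) + j) (drop ?q w) = Xp R u @ take j (Yp R u)"
    using d(4) j(2,3) prefix_append_iff_take_drop[of "b @ overlap_chain us ys" "Xp R u @ y" w] by simp
  from stem_extend[OF "4.IH"[OF d(1)] d(2) j(1,2) this] show ?case
    using j by (simp add: overlap_chain_snoc len add.assoc)
qed (auto simp: stem_decomp_def)

lemma overlap_stem_iff_decomp: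
  "overlap_stem w q \<longleftrightarrow> (\<exists>b us ys. stem_decomp w b us ys \<and> length (b @ overlap_chain us ys) = q)"
  using overlap_stem_imp_decomp stem_decomp_imp_overlap_stem by blast

lemma overlap_decomp_snoc_iff:
  "overlap_decomp R w p b (us @ [u]) ys \<longleftrightarrow>
     stem_decomp w b us ys \<and> u \<in> rel_words R \<and> p = b @ overlap_chain us ys @ xy u \<and> prefix p w"
proof -
  have "prefix (b @ overlap_chain us ys @ xy u) w \<Longrightarrow> prefix (b @ overlap_chain us ys) w"
    by (metis append_assoc prefixI prefix_order.trans)
  moreover have "length ys = length us \<Longrightarrow>
      (\<forall>i<length ys. ys ! i \<noteq> [] \<and> strict_prefix (ys ! i) (Yp R ((us @ [u]) ! i))) \<longleftrightarrow>
      (\<forall>i<length ys. ys ! i \<noteq> [] \<and> strict_prefix (ys ! i) (Yp R (us ! i)))"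
    by (simp add: nth_append)
  ultimately show ?thesis
    unfolding overlap_decomp_def stem_decomp_def xy_factor_at_def
    using overlap_chain_append_words[of ys us "[u]"]
    by (auto simp: overlap_chain_def)
qed

lemma clean_rel_prefix_iff:
  "clean_rel_prefix R w a u \<longleftrightarrow> u \<in> rel_words R \<and> prefix (a @ xy u) w \<and>
     (\<forall>j<length (Yp R u). \<not> xy_factor_at w (length a + length (Xp R u) + j))"
proof -
  have "(\<exists>Y' u0. strict_prefix Y' (Yp R u) \<and> u0 \<in> rel_words R \<and> prefix (a @ Xp R u @ Y' @ xy u0) w)
     \<longleftrightarrow> (\<exists>j<length (Yp R u). xy_factor_at w (length a + length (Xp R u) + j))"
    if "prefix (a @ xy u) w"
  proof
    assume "\<exists>Y' u0. strict_prefix Y' (Yp R u) \<and> u0 \<in> rel_words R \<and> prefix (a @ Xp R u @ Y' @ xy u0) w"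
    then obtain Y' u0 where "strict_prefix Y' (Yp R u)" "u0 \<in> rel_words R"
      "prefix ((a @ Xp R u @ Y') @ xy u0) w" by auto
    then show "\<exists>j<length (Yp R u). xy_factor_at w (length a + length (Xp R u) + j)"
      unfolding xy_factor_at_def prefix_append_iff_take_drop
      by (intro exI[of _ "length Y'"]) (auto simp: prefix_length_less add.assoc)
  next
    assume "\<exists>j<length (Yp R u). xy_factor_at w (length a + length (Xp R u) + j)"
    then obtain j u0 where j: "j < length (Yp R u)" "u0 \<in> rel_words R"
      "take (length (xy u0)) (drop (length a + length (Xp R u) + j) w) = xy u0"
      unfolding xy_factor_at_def by blast
    have "prefix (a @ Xp R u @ take j (Yp R u)) w"
      using that by (metis append_assoc prefix_append take_is_prefix prefix_order.trans)
    then have "prefix ((a @ Xp R u @ take j (Yp R u)) @ xy u0) w"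
      using j by (simp add: prefix_append_iff_take_drop add.assoc del: append_assoc)
    moreover have "strict_prefix (take j (Yp R u)) (Yp R u)"
      using j(1) nonempty_strict_prefix_iff_take by (simp add: take_is_prefix prefix_order.less_le)
    ultimately show "\<exists>Y' u0. strict_prefix Y' (Yp R u) \<and> u0 \<in> rel_words R \<and> prefix (a @ Xp R u @ Y' @ xy u0) w"
      using j(2) by auto
  qed
  then show ?thesis
    unfolding clean_rel_prefix_def by auto
qed

lemma clean_overlap_prefix_iff:
  "clean_overlap_prefix R w p \<longleftrightarrow> (\<exists>b us ys u. stem_decomp w b us ys \<and>
     p = b @ overlap_chain us ys @ xy u \<and> clean_rel_prefix R w (b @ overlap_chain us ys) u)"
proof
  assume "clean_overlap_prefix R w p"
  then obtain b us' ys where d: "overlap_decomp R w p b us' ys"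
    "clean_rel_prefix R w (b @ overlap_chain us' ys) (last us')"
    unfolding clean_overlap_prefix_def overlap_chain_def by blast
  then obtain us u where "us' = us @ [u]"
    unfolding overlap_decomp_def by (metis One_nat_def append_butlast_last_id le_numeral_extra(2) list.size(3))
  moreover have "length ys \<le> length us"
    using d(1) calculation by (simp add: overlap_decomp_def)
  ultimately show "\<exists>b us ys u. stem_decomp w b us ys \<and>
     p = b @ overlap_chain us ys @ xy u \<and> clean_rel_prefix R w (b @ overlap_chain us ys) u"
    using d by (auto simp: overlap_decomp_snoc_iff overlap_chain_append_words)
next
  assume "\<exists>b us ys u. stem_decomp w b us ys \<and>
     p = b @ overlap_chain us ys @ xy u \<and> clean_rel_prefix R w (b @ overlap_chain us ys) u"
  then obtain b us ys u where d: "stem_decomp w b us ys" "p = b @ overlap_chain us ys @ xy u"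
    "clean_rel_prefix R w (b @ overlap_chain us ys) u" by blast
  then have "overlap_decomp R w p b (us @ [u]) ys"
    by (simp add: overlap_decomp_snoc_iff clean_rel_prefix_def)
  moreover have "overlap_chain (us @ [u]) ys = overlap_chain us ys"
    using d(1) by (simp add: overlap_chain_append_words stem_decomp_def)
  ultimately show "clean_overlap_prefix R w p"
    unfolding clean_overlap_prefix_def using d(3) by (metis last_snoc overlap_chain_def)
qed

theorem clean_overlap_end_iff:
  "clean_overlap_end w k \<longleftrightarrow> k \<le> length w \<and> clean_overlap_prefix R w (take k w)"
proof
  assume "clean_overlap_end w k"
  then obtain b us ys u where d: "stem_decomp w b us ys" "u \<in> rel_words R"
    "take (length (xy u)) (drop (length (b @ overlap_chain us ys)) w) = xy u"
    "k = length (b @ overlap_chain us ys @ xy u)"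
    "\<forall>j<length (Yp R u). \<not> xy_factor_at w (length (b @ overlap_chain us ys) + length (Xp R u) + j)"
    unfolding clean_overlap_end_def overlap_stem_iff_decomp by auto
  have "prefix (b @ overlap_chain us ys) w"
    using d(1) by (simp add: stem_decomp_def)
  then have "prefix ((b @ overlap_chain us ys) @ xy u) w"
    using d(3) prefix_append_iff_take_drop by blast
  then have "take k w = b @ overlap_chain us ys @ xy u" "k \<le> length w"
    using d(4) prefix_take_length prefix_length_le by (metis append_assoc)+
  moreover have "clean_rel_prefix R w (b @ overlap_chain us ys) u"
    using d(2,5) \<open>prefix ((b @ overlap_chain us ys) @ xy u) w\<close> by (simp add: clean_rel_prefix_iff)
  ultimately show "k \<le> length w \<and> clean_overlap_prefix R w (take k w)"
    using d(1) clean_overlap_prefix_iff by blast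
next
  assume k: "k \<le> length w \<and> clean_overlap_prefix R w (take k w)"
  then obtain b us ys u where d: "stem_decomp w b us ys" "take k w = b @ overlap_chain us ys @ xy u"
    "clean_rel_prefix R w (b @ overlap_chain us ys) u"
    by (auto simp: clean_overlap_prefix_iff)
  have "k = length (b @ overlap_chain us ys) + length (xy u)"
    using k arg_cong[OF d(2), of length] by simp
  moreover have "overlap_stem w (length (b @ overlap_chain us ys))"
    using d(1) overlap_stem_iff_decomp by blast
  moreover have "take (length (xy u)) (drop (length (b @ overlap_chain us ys)) w) = xy u"
    using d(3) prefix_append_iff_take_drop unfolding clean_rel_prefix_iff by blast
  ultimately show "clean_overlap_end w k"
    using d(3) unfolding clean_overlap_end_def clean_rel_prefix_iff by blast
qed

lemma clean_overlap_prefix_eq_take: "clean_overlap_prefix R w p \<Longrightarrow> p = take (length p) w"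
  unfolding clean_overlap_prefix_def overlap_decomp_def by (metis prefix_take_length)

section \<open>Locality and finitely many residuals\<close>

definition lookahead :: nat where
  "lookahead = Suc (Max (insert 0 ((\<lambda>u. length (xy u)) ` rel_words R)))"

lemma length_xy_less_lookahead: "finite R \<Longrightarrow> u \<in> rel_words R \<Longrightarrow> length (xy u) < lookahead"
  unfolding lookahead_def rel_words_def by (simp add: le_imp_less_Suc)

lemma xy_factor_at_cong_take:
  assumes "finite R" "take n w = take n w'" "i + lookahead \<le> n"
  shows "xy_factor_at w i \<longleftrightarrow> xy_factor_at w' i"
  unfolding xy_factor_at_def
proof (rule bex_cong[OF refl])
  fix u assume "u \<in> rel_words R"
  then have "take (length (xy u)) (drop i w) = take (length (xy u)) (drop i w')"
    using length_xy_less_lookahead assms by (intro take_drop_eq_if_take_eq) fastforce+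
  then show "take (length (xy u)) (drop i w) = xy u \<longleftrightarrow> take (length (xy u)) (drop i w') = xy u"
    by simp
qed

lemma overlap_stem_cong_take:
  assumes "finite R" "take n w = take n w'"
  shows "overlap_stem w q \<Longrightarrow> q + lookahead \<le> n \<Longrightarrow> overlap_stem w' q"
proof (induction rule: overlap_stem.induct)
  case (stem_start q)
  have "q \<le> length w'"
    using stem_start arg_cong[OF assms(2), of length] by (simp add: min_def split: if_splits)
  moreover have "\<forall>i<q. \<not> xy_factor_at w' i"
    using stem_start xy_factor_at_cong_take[OF assms] by auto
  ultimately show ?case by (rule overlap_stem.stem_start)
next
  case (stem_extend q u j)
  then have "overlap_stem w' q" by simp
  moreover have "take (length (Xp R u) + j) (drop q w') = Xp R u @ take j (Yp R u)"
    using stem_extend.hyps(5) take_drop_eq_if_take_eq[OF assms(2), of q "length (Xp R u) + j"]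
      stem_extend.prems by simp
  ultimately show ?case using stem_extend.hyps(2-4) by (blast intro: overlap_stem.stem_extend)
qed

lemma clean_overlap_end_cong_take:
  assumes "finite R" "take n w = take n w'" "k + lookahead \<le> n" "clean_overlap_end w k"
  shows "clean_overlap_end w' k"
proof -
  obtain q u where q: "overlap_stem w q" "u \<in> rel_words R" "take (length (xy u)) (drop q w) = xy u"
      "k = q + length (xy u)" "\<forall>j<length (Yp R u). \<not> xy_factor_at w (q + length (Xp R u) + j)"
    using assms(4) unfolding clean_overlap_end_def by blast
  have "overlap_stem w' q" using overlap_stem_cong_take[OF assms(1,2) q(1)] assms(3) q(4) by simp
  moreover have "take (length (xy u)) (drop q w) = take (length (xy u)) (drop q w')"
    using q(4) assms(3) by (intro take_drop_eq_if_take_eq[OF assms(2)]) simp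
  then have "take (length (xy u)) (drop q w') = xy u" using q(3) by simp
  moreover have "\<forall>j<length (Yp R u). \<not> xy_factor_at w' (q + length (Xp R u) + j)"
    using q(4,5) xy_factor_at_cong_take[OF assms(1,2)] assms(3) by auto
  ultimately show ?thesis unfolding clean_overlap_end_def using q(2,4) by blast
qed

lemma xy_factor_at_shift:
  "drop p w = drop p' w' \<Longrightarrow> xy_factor_at w (p + s) \<longleftrightarrow> xy_factor_at w' (p' + s)"
  unfolding xy_factor_at_def using take_drop_add_eq_if_drop_eq by metis

lemma overlap_stem_shift_step:
  assumes fin: "finite R" and dr: "drop p w = drop p' w'"
    and p: "p \<le> length w" "p' \<le> length w'"
    and free: "(\<forall>i<p. \<not> xy_factor_at w i) \<longleftrightarrow> (\<forall>i<p'. \<not> xy_factor_at w' i)"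
    and window: "\<forall>s<lookahead. overlap_stem w (p + s) \<longleftrightarrow> overlap_stem w' (p' + s)"
    and IH: "\<forall>t'<t. overlap_stem w (p + t') \<longleftrightarrow> overlap_stem w' (p' + t')"
    and stem: "overlap_stem w (p + t)"
  shows "overlap_stem w' (p' + t)"
proof (cases "t < lookahead")
  case True
  then show ?thesis using window stem by blast
next
  case False
  from stem show ?thesis
  proof (cases rule: overlap_stem.cases)
    case stem_start
    have "p' + t \<le> length w'"
      using stem_start(1) p arg_cong[OF dr, of length] by simp
    moreover have "\<not> xy_factor_at w' i" if "i < p' + t" for i
    proof (cases "i < p'")
      case True
      then show ?thesis using free stem_start(2) by auto
    next
      case False
      then have "i = p' + (i - p')" "i - p' < t" using that by auto
      then show ?thesis using stem_start(2) xy_factor_at_shift[OF dr, of "i - p'"] by auto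
    qed
    ultimately show ?thesis by (blast intro: overlap_stem.stem_start)
  next
    case (stem_extend q u j)
    have "length (Xp R u) + j < lookahead"
      using length_xy_less_lookahead[OF fin stem_extend(3)] stem_extend(5) by simp
    then obtain t' where t': "q = p + t'" "t' < t" "t = t' + length (Xp R u) + j"
      using stem_extend(1,4) False by (intro that[of "t - (length (Xp R u) + j)"]) auto
    have "take (length (Xp R u) + j) (drop (p' + t') w') = Xp R u @ take j (Yp R u)"
      using stem_extend(6) t'(1) take_drop_add_eq_if_drop_eq[OF dr, of "length (Xp R u) + j" t'] by simp
    from overlap_stem.stem_extend[OF _ stem_extend(3-5) this] show ?thesis
      using IH stem_extend(2) t' by (simp add: add.assoc)
  qed
qed

lemma overlap_stem_shift:
  assumes "finite R" and "drop p w = drop p' w'" and "p \<le> length w" "p' \<le> length w'"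
    and "(\<forall>i<p. \<not> xy_factor_at w i) \<longleftrightarrow> (\<forall>i<p'. \<not> xy_factor_at w' i)"
    and "\<forall>s<lookahead. overlap_stem w (p + s) \<longleftrightarrow> overlap_stem w' (p' + s)"
  shows "overlap_stem w (p + t) \<longleftrightarrow> overlap_stem w' (p' + t)"
proof (induction t rule: less_induct)
  case (less t)
  then have "\<forall>t'<t. overlap_stem w (p + t') \<longleftrightarrow> overlap_stem w' (p' + t')" by blast
  with overlap_stem_shift_step[OF assms] overlap_stem_shift_step[OF assms(1) assms(2)[symmetric] assms(4,3)
      assms(5)[symmetric]] assms(6)
  show ?case by metis
qed

lemma clean_overlap_end_shift:
  assumes fin: "finite R" and dr: "drop p w = drop p' w'"
    and p: "p + 2 * lookahead \<le> length w" "p' \<le> length w'"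
    and stems: "\<forall>t. overlap_stem w (p + t) \<longleftrightarrow> overlap_stem w' (p' + t)"
    and d: "d \<le> lookahead" and clean: "clean_overlap_end w (length w - d)"
  shows "clean_overlap_end w' (length w' - d)"
proof -
  obtain q u where q: "overlap_stem w q" "u \<in> rel_words R" "take (length (xy u)) (drop q w) = xy u"
      "length w - d = q + length (xy u)"
      "\<forall>j<length (Yp R u). \<not> xy_factor_at w (q + length (Xp R u) + j)"
    using clean unfolding clean_overlap_end_def by blast
  have len: "length w - p = length w' - p'" using arg_cong[OF dr, of length] by simp
  have "length (xy u) < lookahead" using length_xy_less_lookahead[OF fin q(2)] .
  then obtain t where qt: "q = p + t" using q(4) p d by (intro that[of "q - p"]) linarith
  have "overlap_stem w' (p' + t)" using stems q(1) qt by simp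
  moreover have "take (length (xy u)) (drop (p' + t) w') = xy u"
    using q(3) qt take_drop_add_eq_if_drop_eq[OF dr] by metis
  moreover have "length w' - d = p' + t + length (xy u)" using q(4) qt len p d by linarith
  moreover have "\<forall>j<length (Yp R u). \<not> xy_factor_at w' (p' + t + length (Xp R u) + j)"
    using q(5) qt xy_factor_at_shift[OF dr] by (simp add: add.assoc)
  ultimately show ?thesis using q(2) unfolding clean_overlap_end_def by blast
qed

lemma overlap_stem_append_iff:
  "finite R \<Longrightarrow> q + lookahead \<le> length x \<Longrightarrow> overlap_stem (x @ z) q \<longleftrightarrow> overlap_stem x q"
  using overlap_stem_cong_take[of "length x" "x @ z" x] overlap_stem_cong_take[of "length x" x "x @ z"]
  by auto

lemma xy_factor_at_append_iff:
  "finite R \<Longrightarrow> i + lookahead \<le> length x \<Longrightarrow> xy_factor_at (x @ z) i \<longleftrightarrow> xy_factor_at x i"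
  using xy_factor_at_cong_take[of "length x" "x @ z" x] by simp

definition recent_clean_ends :: "'a list \<Rightarrow> nat \<Rightarrow> bool" where
  "recent_clean_ends w d \<longleftrightarrow> d \<le> lookahead \<and> d \<le> length w \<and> clean_overlap_end w (length w - d)"

lemma recent_clean_ends_take_lookahead:
  assumes "finite R" and "m \<le> length w"
  shows "recent_clean_ends (take m w) lookahead \<longleftrightarrow> lookahead \<le> m \<and> clean_overlap_end w (m - lookahead)"
proof -
  have "take m (take m w) = take m w" by simp
  then show ?thesis
    unfolding recent_clean_ends_def using assms
      clean_overlap_end_cong_take[OF assms(1), of m "take m w" w "m - lookahead"]
      clean_overlap_end_cong_take[OF assms(1), of m w "take m w" "m - lookahead"]
    by (auto simp: min_def)
qed

definition window_summary :: "'a list \<Rightarrow> 'a list \<times> bool \<times> nat set" where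
  "window_summary x = (let p = length x - 2 * lookahead in
     if length x < 2 * lookahead then (x, False, {})
     else (drop p x, \<forall>i<p. \<not> xy_factor_at x i, {s. s < lookahead \<and> overlap_stem x (p + s)}))"

lemma residual_eq_if_window_summary_eq:
  assumes fin: "finite R" and eq: "window_summary x = window_summary y"
  shows "residual recent_clean_ends x = residual recent_clean_ends y"
proof (cases "length x < 2 * lookahead \<or> length y < 2 * lookahead")
  case True
  then have "x = y"
    using eq arg_cong[OF eq, of "length \<circ> fst"] by (auto simp: window_summary_def Let_def split: if_splits)
  then show ?thesis by simp
next
  case False
  define p p' where "p = length x - 2 * lookahead" and "p' = length y - 2 * lookahead"
  have summary: "drop p x = drop p' y" "(\<forall>i<p. \<not> xy_factor_at x i) \<longleftrightarrow> (\<forall>i<p'. \<not> xy_factor_at y i)"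
      "s < lookahead \<Longrightarrow> overlap_stem x (p + s) \<longleftrightarrow> overlap_stem y (p' + s)" for s
    using eq False by (auto simp: window_summary_def Let_def p_def p'_def set_eq_iff)
  show ?thesis
  proof
    fix z
    have lengths: "p + 2 * lookahead = length x" "p' + 2 * lookahead = length y"
      using False by (simp_all add: p_def p'_def)
    have dr: "drop p (x @ z) = drop p' (y @ z)" using summary(1) lengths by simp
    have "(\<forall>i<p. \<not> xy_factor_at (x @ z) i) \<longleftrightarrow> (\<forall>i<p'. \<not> xy_factor_at (y @ z) i)"
      using summary(2) xy_factor_at_append_iff[OF fin] lengths by auto
    moreover have "\<forall>s<lookahead. overlap_stem (x @ z) (p + s) \<longleftrightarrow> overlap_stem (y @ z) (p' + s)"
      using summary(3) overlap_stem_append_iff[OF fin] lengths by auto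
    ultimately have stems: "\<forall>t. overlap_stem (x @ z) (p + t) \<longleftrightarrow> overlap_stem (y @ z) (p' + t)"
      using overlap_stem_shift[OF fin dr] lengths by simp
    moreover have "\<forall>t. overlap_stem (y @ z) (p' + t) \<longleftrightarrow> overlap_stem (x @ z) (p + t)"
      using stems by simp
    ultimately have "recent_clean_ends (x @ z) d \<longleftrightarrow> recent_clean_ends (y @ z) d" for d
      using clean_overlap_end_shift[OF fin dr _ _ stems, of d]
        clean_overlap_end_shift[OF fin dr[symmetric], of d] lengths
      unfolding recent_clean_ends_def by auto
    then show "residual recent_clean_ends x z = residual recent_clean_ends y z"
      unfolding residual_def by blast
  qed
qed

lemma finite_residuals_recent_clean_ends:
  assumes "finite R" and "finite A"
  shows "finite (residual recent_clean_ends ` lists A)"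
proof (rule finite_image_if_factors)
  have "window_summary ` lists A \<subseteq> {xs. set xs \<subseteq> A \<and> length xs \<le> 2 * lookahead} \<times> UNIV \<times> Pow {..<lookahead}"
    by (auto simp: window_summary_def Let_def in_lists_conv_set dest: in_set_dropD)
  moreover have "finite ({xs. set xs \<subseteq> A \<and> length xs \<le> 2 * lookahead} \<times> (UNIV :: bool set) \<times> Pow {..<lookahead})"
    using assms(2) by (simp add: finite_lists_length_le)
  ultimately show "finite (window_summary ` lists A)" by (rule finite_subset)
qed (use residual_eq_if_window_summary_eq[OF assms(1)] in blast)

text \<open>A clean overlap end \<open>k\<close> is only certain once \<open>k + lookahead\<close> letters have been read, so
  it is reported \<open>lookahead\<close> letters late.\<close>

definition stop_verdict :: "(nat \<Rightarrow> bool) \<Rightarrow> nat option" where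
  "stop_verdict v = (if v lookahead then Some lookahead else None)"

lemma stop_verdict_take_eq_Some:
  "finite R \<Longrightarrow> m \<le> length w \<Longrightarrow> stop_verdict (recent_clean_ends (take m w)) = Some d \<longleftrightarrow>
     d = lookahead \<and> lookahead \<le> m \<and> clean_overlap_end w (m - lookahead)"
  using recent_clean_ends_take_lookahead by (auto simp: stop_verdict_def)

end

section \<open>Running a finite automaton on a random access machine\<close>

text \<open>Register 0 stays 0 until the result is written, so \<open>JumpZ 0\<close> is an unconditional jump.
  The program first jumps to the initialisation code behind the loop, which writes the transition
  table to the addresses from 100 on (through registers 8 and 9). In the loop, register 1 counts
  the letters read and register 2 holds the address of the table block of the current state;
  registers 5 and 6 hold the constants 1 and \<open>E\<close>. A block has the end verdict at offset 0, the
  block of the successor state under the letter with code \<open>c\<close> at offset \<open>c + 1\<close>, and the stop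
  verdict at offset \<open>E\<close>. A verdict is 0 (none) or \<open>d + 1\<close>; after \<open>m\<close> letters it is reported as
  \<open>m + 2 - (d + 1)\<close>.\<close>

definition scan_loop :: "instr list" where
  "scan_loop =
     [JumpZ 0 16,
      ReadIn 3 1, Add 4 2 3, JumpZ 3 10, Load 2 4, Add 1 1 5, Add 4 2 6, Load 3 4, JumpZ 3 1,
      JumpZ 0 12, Load 3 4, JumpZ 3 15,
      Add 0 1 5, Add 0 0 5, Sub 0 0 3, Halt]"

definition table_init :: "(nat \<Rightarrow> nat) \<Rightarrow> nat list \<Rightarrow> instr list" where
  "table_init M as = concat (map (\<lambda>a. [LoadConst 8 a, LoadConst 9 (M a), Store 8 9]) as)"

definition scan_program :: "(nat \<Rightarrow> nat) \<Rightarrow> nat \<Rightarrow> nat \<Rightarrow> nat \<Rightarrow> instr list" where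
  "scan_program M T E b0 =
     scan_loop @ [LoadConst 5 1, LoadConst 6 E, LoadConst 2 b0] @ table_init M [100..<100 + T] @ [JumpZ 0 1]"

lemma funpow_numeral_apply: "((f :: 'a \<Rightarrow> 'a) ^^ numeral k) c = (f ^^ pred_numeral k) (f c)"
  by (simp add: numeral_eq_Suc funpow_Suc_right del: funpow.simps)

lemma funpow_one_apply: "((f :: 'a \<Rightarrow> 'a) ^^ Suc 0) c = f c" "(f ^^ 1) c = f c"
  by simp_all

lemmas funpow_unfold_apply = funpow_numeral_apply funpow_one_apply

lemma length_table_init [simp]: "length (table_init M as) = 3 * length as"
  by (induction as) (auto simp: table_init_def)

lemma table_init_Cons: "table_init M (a # as) = [LoadConst 8 a, LoadConst 9 (M a), Store 8 9] @ table_init M as"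
  by (simp add: table_init_def)

lemma length_scan_loop: "length scan_loop = 16"
  by (simp add: scan_loop_def)

lemma length_scan_program: "length (scan_program M T E b0) = 20 + 3 * T"
  by (simp add: scan_program_def scan_loop_def)

lemma scan_program_nth_loop: "k < 16 \<Longrightarrow> scan_program M T E b0 ! k = scan_loop ! k"
  by (simp add: scan_program_def nth_append length_scan_loop)

lemma run_table_init:
  assumes "\<forall>k < 3 * length as. P ! (pc + k) = table_init M as ! k" "pc + 3 * length as \<le> length P"
    "\<forall>a\<in>set as. 10 \<le> a"
  shows "\<exists>g'. (step P inp ^^ (3 * length as)) (pc, g) = (pc + 3 * length as, g') \<and>
     (\<forall>a\<in>set as. g' a = M a) \<and> (\<forall>r. r \<noteq> 8 \<and> r \<noteq> 9 \<and> r \<notin> set as \<longrightarrow> g' r = g r)"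
  using assms
proof (induction as arbitrary: pc g)
  case Nil
  then show ?case by simp
next
  case (Cons a as)
  have code: "P ! pc = LoadConst 8 a" "P ! Suc pc = LoadConst 9 (M a)" "P ! Suc (Suc pc) = Store 8 9"
    using Cons.prems(1)[rule_format, of 0] Cons.prems(1)[rule_format, of 1] Cons.prems(1)[rule_format, of 2]
    by (simp_all add: table_init_Cons)
  have "10 \<le> a" using Cons.prems(3) by simp
  let ?g = "g(8 := a, 9 := M a, a := M a)"
  have first: "(step P inp ^^ 3) (pc, g) = (pc + 3, ?g)"
    using Cons.prems(2) \<open>10 \<le> a\<close>
    by (simp add: funpow_unfold_apply step_def halted_def code del: funpow.simps)
  have rest: "\<forall>k < 3 * length as. P ! (pc + 3 + k) = table_init M as ! k"
  proof (intro allI impI)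
    fix k assume "k < 3 * length as"
    then have "P ! (pc + (3 + k)) = table_init M (a # as) ! (3 + k)" using Cons.prems(1) by simp
    then show "P ! (pc + 3 + k) = table_init M as ! k" by (simp add: table_init_Cons add.assoc)
  qed
  obtain g' where g': "(step P inp ^^ (3 * length as)) (pc + 3, ?g) = (pc + 3 + 3 * length as, g')"
    "\<forall>a\<in>set as. g' a = M a" "\<forall>r. r \<noteq> 8 \<and> r \<noteq> 9 \<and> r \<notin> set as \<longrightarrow> g' r = ?g r"
    using Cons.IH[OF rest] Cons.prems(2,3) by fastforce
  have "(step P inp ^^ (3 * length (a # as))) (pc, g) = (step P inp ^^ (3 * length as)) ((step P inp ^^ 3) (pc, g))"
  proof -
    have "3 * length (a # as) = 3 * length as + 3" by simp
    then show ?thesis by (simp only: funpow_add comp_apply)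
  qed
  also have "\<dots> = (pc + 3 * length (a # as), g')" using first g'(1) by simp
  finally show ?case using g'(2,3) \<open>10 \<le> a\<close> by (intro exI[of _ g']) auto
qed

definition scan_invariant :: "(nat \<Rightarrow> nat) \<Rightarrow> nat \<Rightarrow> nat \<Rightarrow> (nat \<Rightarrow> nat) \<Rightarrow> nat \<Rightarrow> (nat \<Rightarrow> nat) \<Rightarrow> bool" where
  "scan_invariant M T E base m g \<longleftrightarrow> g 0 = 0 \<and> g 1 = m \<and> g 2 = base m \<and> g 5 = 1 \<and> g 6 = E \<and>
     (\<forall>a. 100 \<le> a \<and> a < 100 + T \<longrightarrow> g a = M a)"

definition scan_outcome :: "(nat \<Rightarrow> nat) \<Rightarrow> nat \<Rightarrow> (nat \<Rightarrow> nat) \<Rightarrow> nat \<Rightarrow> nat \<Rightarrow> nat \<Rightarrow> bool" where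
  "scan_outcome M E base n m out \<longleftrightarrow>
     (\<exists>m'. m < m' \<and> m' \<le> n \<and> M (base m' + E) \<noteq> 0 \<and> out = m' + 2 - M (base m' + E)) \<or>
     ((\<forall>m'. m < m' \<and> m' \<le> n \<longrightarrow> M (base m' + E) = 0) \<and>
      out = (if M (base n) = 0 then 0 else n + 2 - M (base n)))"

lemma scan_invariant_memory:
  "scan_invariant M T E base m g \<Longrightarrow> 100 \<le> a \<Longrightarrow> a < 100 + T \<Longrightarrow> g a = M a"
  by (simp add: scan_invariant_def)

lemma scan_outcome_skip:
  assumes "M (base (Suc m) + E) = 0" and "scan_outcome M E base n (Suc m) out"
  shows "scan_outcome M E base n m out"
proof -
  have "m < m' \<longleftrightarrow> Suc m < m' \<or> m' = Suc m" for m' by auto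
  then show ?thesis using assms unfolding scan_outcome_def by metis
qed

context
  fixes M :: "nat \<Rightarrow> nat" and T E :: nat and base :: "nat \<Rightarrow> nat" and inp :: "nat list"
  assumes blocks: "\<forall>m \<le> length inp. 100 \<le> base m \<and> base m + E < 100 + T"
    and transitions: "\<forall>m < length inp. inp ! m + 1 < E \<and> M (base m + (inp ! m + 1)) = base (Suc m)"
begin

abbreviation "scan_step \<equiv> step (scan_program M T E (base 0)) inp"

lemma scan_report:
  assumes "g 0 = 0" "g 1 = m" "g 5 = 1" "g 3 = v"
  shows "(scan_step ^^ 3) (12, g) = (15, g(0 := m + 2 - v))"
  using assms length_scan_program[of M T E "base 0"]
  by (simp add: funpow_unfold_apply step_def halted_def scan_program_nth_loop scan_loop_def del: funpow.simps)

lemma scan_halted: "halted (scan_program M T E (base 0)) (15, g)"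
  by (simp add: halted_def scan_program_nth_loop scan_loop_def)

lemma scan_loop_end:
  assumes inv: "scan_invariant M T E base m g" and m: "m = length inp"
  shows "\<exists>t \<le> 8. halted (scan_program M T E (base 0)) ((scan_step ^^ t) (1, g)) \<and>
    snd ((scan_step ^^ t) (1, g)) 0 = (if M (base m) = 0 then 0 else m + 2 - M (base m))"
proof -
  let ?v = "M (base m)"
  have b: "100 \<le> base m" "base m + E < 100 + T" using blocks m by auto
  then have "g (base m) = ?v" by (intro scan_invariant_memory[OF inv]) auto
  then have five: "(scan_step ^^ 5) (1, g) = (if ?v = 0 then 15 else 12, g(4 := base m, 3 := ?v))"
    using inv m b length_scan_program[of M T E "base 0"]
    by (simp add: scan_invariant_def funpow_unfold_apply step_def halted_def scan_program_nth_loop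
        scan_loop_def del: funpow.simps)
  show ?thesis
  proof (cases "?v = 0")
    case True
    then show ?thesis using five inv scan_halted by (intro exI[of _ 5]) (simp add: scan_invariant_def)
  next
    case False
    have "(scan_step ^^ 8) (1, g) = (scan_step ^^ 3) ((scan_step ^^ 5) (1, g))"
      by (simp add: funpow_add[of 3 5, simplified] del: funpow.simps)
    also have "\<dots> = (15, g(4 := base m, 3 := ?v, 0 := m + 2 - ?v))"
      using five False inv by (simp add: scan_report scan_invariant_def)
    finally show ?thesis using False scan_halted by (intro exI[of _ 8]) simp
  qed
qed

lemma scan_loop_letter:
  assumes inv: "scan_invariant M T E base m g" and m: "m < length inp"
  shows "\<exists>g'. (scan_step ^^ 8) (1, g) = (if M (base (Suc m) + E) = 0 then 1 else 9, g') \<and>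
    scan_invariant M T E base (Suc m) g' \<and> g' 3 = M (base (Suc m) + E)"
proof -
  let ?f = "M (base (Suc m) + E)"
  have b: "100 \<le> base m" "base m + E < 100 + T" "100 \<le> base (Suc m)" "base (Suc m) + E < 100 + T"
    using blocks m by auto
  have tr: "inp ! m + 1 < E" "M (base m + (inp ! m + 1)) = base (Suc m)" using transitions m by auto
  have "g (base m + (inp ! m + 1)) = M (base m + (inp ! m + 1))" "g (base (Suc m) + E) = ?f"
    using b tr(1) by (intro scan_invariant_memory[OF inv]; linarith)+
  then have "g (base m + (inp ! m + 1)) = base (Suc m)" "g (base (Suc m) + E) = ?f"
    using tr(2) by simp_all
  then have "fst ((scan_step ^^ 7) (1, g)) = 8 \<and>
      scan_invariant M T E base (Suc m) (snd ((scan_step ^^ 7) (1, g))) \<and> snd ((scan_step ^^ 7) (1, g)) 3 = ?f"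
    using inv m b tr length_scan_program[of M T E "base 0"]
    by (simp add: scan_invariant_def funpow_unfold_apply step_def halted_def scan_program_nth_loop
        scan_loop_def del: funpow.simps)
  moreover have "(scan_step ^^ 8) (1, g) = scan_step ((scan_step ^^ 7) (1, g))"
    by (simp only: funpow_add[of 1 7, simplified] comp_apply funpow_one_apply)
  ultimately show ?thesis using length_scan_program[of M T E "base 0"]
    by (cases "(scan_step ^^ 7) (1, g)")
      (simp add: step_def halted_def scan_program_nth_loop scan_loop_def scan_invariant_def)
qed

lemma scan_loop_run:
  "m \<le> length inp \<Longrightarrow> scan_invariant M T E base m g \<Longrightarrow>
    \<exists>t \<le> 8 * (length inp - m) + 12. halted (scan_program M T E (base 0)) ((scan_step ^^ t) (1, g)) \<and>
      scan_outcome M E base (length inp) m (snd ((scan_step ^^ t) (1, g)) 0)"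
proof (induction "length inp - m" arbitrary: m g)
  case 0
  then have m: "m = length inp" by simp
  obtain t where "t \<le> 8" "halted (scan_program M T E (base 0)) ((scan_step ^^ t) (1, g))"
    "snd ((scan_step ^^ t) (1, g)) 0 = (if M (base m) = 0 then 0 else m + 2 - M (base m))"
    using scan_loop_end[OF 0(3) m] by blast
  then show ?case using m unfolding scan_outcome_def by (intro exI[of _ t]) auto
next
  case (Suc k)
  then have m: "m < length inp" by simp
  let ?f = "M (base (Suc m) + E)"
  obtain g' where g': "(scan_step ^^ 8) (1, g) = (if ?f = 0 then 1 else 9, g')"
    "scan_invariant M T E base (Suc m) g'" "g' 3 = ?f"
    using scan_loop_letter[OF Suc.prems(2) m] by blast
  show ?case
  proof (cases "?f = 0")
    case True
    have "k = length inp - Suc m" using Suc.hyps(2) by simp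
    from Suc.hyps(1)[OF this _ g'(2)] m obtain t where t: "t \<le> 8 * (length inp - Suc m) + 12"
      "halted (scan_program M T E (base 0)) ((scan_step ^^ t) (1, g'))"
      "scan_outcome M E base (length inp) (Suc m) (snd ((scan_step ^^ t) (1, g')) 0)"
      by auto
    have "(scan_step ^^ (t + 8)) (1, g) = (scan_step ^^ t) (1, g')"
      using g'(1) True by (simp only: funpow_add comp_apply) simp
    then show ?thesis using t m True scan_outcome_skip
      by (intro exI[of _ "t + 8"]) auto
  next
    case False
    have "scan_step (9, g') = (12, g')"
      using g'(2) length_scan_program[of M T E "base 0"]
      by (simp add: step_def halted_def scan_program_nth_loop scan_loop_def scan_invariant_def)
    then have "(scan_step ^^ 12) (1, g) = (scan_step ^^ 3) (12, g')"
      using g'(1) False by (simp only: funpow_add[of 3 9, simplified] funpow_add[of 1 8, simplified]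
          comp_apply funpow_one_apply) simp
    also have "\<dots> = (15, g'(0 := Suc m + 2 - ?f))"
      using g'(2,3) by (intro scan_report) (simp_all add: scan_invariant_def)
    finally show ?thesis using False m scan_halted unfolding scan_outcome_def
      by (intro exI[of _ 12]) auto
  qed
qed

lemma scan_program_run:
  "\<exists>t \<le> 3 * T + 8 * length inp + 17.
     halted (scan_program M T E (base 0)) (run (scan_program M T E (base 0)) inp t) \<and>
     scan_outcome M E base (length inp) 0 (snd (run (scan_program M T E (base 0)) inp t) 0)"
proof -
  let ?P = "scan_program M T E (base 0)"
  let ?g0 = "(\<lambda>_. 0 :: nat)(5 := 1, 6 := E, 2 := base 0)"
  have "(scan_step ^^ 4) (0, \<lambda>_. 0) = (19, ?g0)"
    using length_scan_program[of M T E "base 0"]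
    by (simp add: funpow_unfold_apply step_def halted_def scan_program_def nth_append scan_loop_def
        del: funpow.simps)
  moreover obtain g1 where g1: "(scan_step ^^ (3 * T)) (19, ?g0) = (19 + 3 * T, g1)"
    "\<forall>a\<in>{100..<100 + T}. g1 a = M a" "\<forall>r. r \<noteq> 8 \<and> r \<noteq> 9 \<and> r \<notin> {100..<100 + T} \<longrightarrow> g1 r = ?g0 r"
    using run_table_init[of "[100..<100 + T]" ?P 19 M inp ?g0] length_scan_program[of M T E "base 0"]
    by (fastforce simp: scan_program_def nth_append length_scan_loop)
  moreover have "scan_step (19 + 3 * T, g1) = (1, g1)"
    using g1(3) length_scan_program[of M T E "base 0"]
    by (simp add: step_def halted_def scan_program_def nth_append length_scan_loop)
  ultimately have run: "run ?P inp (t + 1 + 3 * T + 4) = (scan_step ^^ t) (1, g1)" for t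
    unfolding run_def by (simp only: funpow_add comp_apply funpow_one_apply)
  have "scan_invariant M T E base 0 g1"
    unfolding scan_invariant_def using g1(2,3) by auto
  then obtain t where "t \<le> 8 * length inp + 12" "halted ?P ((scan_step ^^ t) (1, g1))"
    "scan_outcome M E base (length inp) 0 (snd ((scan_step ^^ t) (1, g1)) 0)"
    using scan_loop_run[of 0 g1] by auto
  then show ?thesis using run by (intro exI[of _ "t + 1 + 3 * T + 4"]) auto
qed

end

definition scan_result :: "('b \<Rightarrow> nat option) \<Rightarrow> ('b \<Rightarrow> nat option) \<Rightarrow> ('a list \<Rightarrow> 'b) \<Rightarrow> 'a list \<Rightarrow> nat \<Rightarrow> bool" where
  "scan_result stop fin g w out \<longleftrightarrow>
     (\<exists>m d. 0 < m \<and> m \<le> length w \<and> stop (g (take m w)) = Some d \<and> out = Suc m - d) \<or>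
     ((\<forall>m. 0 < m \<and> m \<le> length w \<longrightarrow> stop (g (take m w)) = None) \<and>
      out = (case fin (g w) of None \<Rightarrow> 0 | Some d \<Rightarrow> Suc (length w) - d))"

lemma scan_result_if_scan_outcome:
  assumes "\<forall>m. 0 < m \<and> m \<le> length w \<longrightarrow> M (base m + E) = case_option 0 Suc (stop (g (take m w)))"
    and "M (base (length w)) = case_option 0 Suc (fin (g w))"
    and "scan_outcome M E base (length w) 0 out"
  shows "scan_result stop fin g w out"
proof -
  consider (stop) m where "0 < m" "m \<le> length w" "M (base m + E) \<noteq> 0" "out = m + 2 - M (base m + E)"
    | (fin) "\<forall>m. 0 < m \<and> m \<le> length w \<longrightarrow> M (base m + E) = 0"
      "out = (if M (base (length w)) = 0 then 0 else length w + 2 - M (base (length w)))"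
    using assms(3) unfolding scan_outcome_def by auto
  then show ?thesis
  proof cases
    case stop
    then obtain d where "stop (g (take m w)) = Some d" "M (base m + E) = Suc d"
      using assms(1) by (cases "stop (g (take m w))") auto
    then show ?thesis using stop unfolding scan_result_def by auto
  next
    case fin
    have "stop (g (take m w)) = None" if "0 < m" "m \<le> length w" for m
      using fin(1) assms(1) that by (cases "stop (g (take m w))") auto
    moreover have "out = (case fin (g w) of None \<Rightarrow> 0 | Some d \<Rightarrow> Suc (length w) - d)"
      using fin(2) assms(2) by (cases "fin (g w)") auto
    ultimately show ?thesis unfolding scan_result_def by auto
  qed
qed

lemma finite_table_layout:
  assumes "finite S"
  obtains block T where "\<forall>tab :: 's \<Rightarrow> nat \<Rightarrow> nat. \<exists>M. \<forall>s\<in>S.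
           100 \<le> block s \<and> block s + K \<le> 100 + T \<and> (\<forall>j<K. M (block s + j) = tab s j)"
proof -
  obtain h where h: "bij_betw h {0..<card S} S"
    using ex_bij_betw_nat_finite[OF assms] by blast
  define idx where "idx = inv_into {0..<card S} h"
  have idx: "idx s < card S \<and> h (idx s) = s" if "s \<in> S" for s
    unfolding idx_def using h that
    by (metis atLeastLessThan_iff bij_betw_def bij_betw_inv_into_right inv_into_into)
  define block where "block s = 100 + idx s * K" for s
  show ?thesis
  proof (rule that[of block "card S * K"], intro allI exI ballI conjI impI)
    fix tab :: "'s \<Rightarrow> nat \<Rightarrow> nat" and s assume s: "s \<in> S"
    show "100 \<le> block s" by (simp add: block_def)
    have "Suc (idx s) * K \<le> card S * K" using idx[OF s] by (intro mult_le_mono1) simp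
    then show "block s + K \<le> 100 + card S * K" by (simp add: block_def)
    fix j assume "j < K"
    then have "(block s + j - 100) div K = idx s" "(block s + j - 100) mod K = j"
      by (simp_all add: block_def)
    then show "tab (h ((block s + j - 100) div K)) ((block s + j - 100) mod K) = tab s j"
      using idx[OF s] by simp
  qed
qed

context
  fixes A :: "'a set" and enc :: "'a \<Rightarrow> nat" and E :: nat and block :: "('a list \<Rightarrow> 'b) \<Rightarrow> nat"
    and stop fin :: "'b \<Rightarrow> nat option"
begin

definition table_entry :: "('a list \<Rightarrow> 'b) \<Rightarrow> nat \<Rightarrow> nat" where
  "table_entry s j = (if j = 0 then case_option 0 Suc (fin (s []))
     else if j = E then case_option 0 Suc (stop (s []))
     else block (\<lambda>z. s ((SOME a. a \<in> A \<and> enc a + 1 = j) # z)))"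

context
  fixes g :: "'a list \<Rightarrow> 'b" and T :: nat and M :: "nat \<Rightarrow> nat"
  assumes inj: "inj_on enc A" and enc_less: "\<And>a. a \<in> A \<Longrightarrow> enc a + 1 < E"
    and layout: "\<And>s. s \<in> residual g ` lists A \<Longrightarrow> 100 \<le> block s \<and> block s + Suc E \<le> 100 + T \<and>
      (\<forall>j<Suc E. M (block s + j) = table_entry s j)"
begin

lemma table_layout_take:
  assumes "w \<in> lists A"
  shows "100 \<le> block (residual g (take m w)) \<and> block (residual g (take m w)) + E < 100 + T"
    and "j < Suc E \<Longrightarrow> M (block (residual g (take m w)) + j) = table_entry (residual g (take m w)) j"
proof -
  have "take m w \<in> lists A" using assms by (auto simp: in_lists_conv_set dest: in_set_takeD)
  then show "100 \<le> block (residual g (take m w)) \<and> block (residual g (take m w)) + E < 100 + T"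
    and "j < Suc E \<Longrightarrow> M (block (residual g (take m w)) + j) = table_entry (residual g (take m w)) j"
    using layout by fastforce+
qed

lemma table_transition:
  assumes w: "w \<in> lists A" and m: "m < length w"
  shows "M (block (residual g (take m w)) + (enc (w ! m) + 1)) = block (residual g (take (Suc m) w))"
proof -
  have "w ! m \<in> A" using w m by (simp add: in_lists_conv_set)
  then have j: "enc (w ! m) + 1 < Suc E" "enc (w ! m) + 1 \<noteq> E"
    using enc_less by fastforce+
  have letter: "(SOME a. a \<in> A \<and> enc a + 1 = enc (w ! m) + 1) = w ! m"
    using \<open>w ! m \<in> A\<close> inj by (intro some_equality) (auto simp: inj_on_def)
  have "M (block (residual g (take m w)) + (enc (w ! m) + 1)) =
      block (\<lambda>z. residual g (take m w) (w ! m # z))"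
    using table_layout_take(2)[OF w j(1)] j(2) letter by (simp add: table_entry_def)
  also have "(\<lambda>z. residual g (take m w) (w ! m # z)) = residual g (take (Suc m) w)"
    using m by (simp add: take_Suc_conv_app_nth residual_snoc)
  finally show ?thesis .
qed

lemma table_run:
  assumes w: "w \<in> lists A"
  defines "P \<equiv> scan_program M T E (block (residual g []))"
  shows "\<exists>t \<le> 3 * T + 8 * length w + 17.
    halted P (run P (map enc w) t) \<and> scan_result stop fin g w (snd (run P (map enc w) t) 0)"
proof -
  define base where "base m = block (residual g (take m w))" for m
  have transitions: "\<forall>m < length (map enc w). map enc w ! m + 1 < E \<and>
      M (base m + (map enc w ! m + 1)) = base (Suc m)"
    using w enc_less table_transition[OF w] unfolding base_def by (simp add: in_lists_conv_set)
  have blocks: "\<forall>m \<le> length (map enc w). 100 \<le> base m \<and> base m + E < 100 + T"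
    using table_layout_take(1)[OF w] unfolding base_def by blast
  obtain t where t: "t \<le> 3 * T + 8 * length w + 17" "halted P (run P (map enc w) t)"
    "scan_outcome M E base (length w) 0 (snd (run P (map enc w) t) 0)"
    using scan_program_run[OF blocks transitions] unfolding P_def base_def by auto
  have "scan_result stop fin g w (snd (run P (map enc w) t) 0)"
  proof (rule scan_result_if_scan_outcome[OF _ _ t(3)])
    show "\<forall>m. 0 < m \<and> m \<le> length w \<longrightarrow> M (base m + E) = case_option 0 Suc (stop (g (take m w)))"
    proof (intro allI impI)
      fix m assume "0 < m \<and> m \<le> length w"
      then have "E \<noteq> 0" using enc_less[of "hd w"] w by (cases w) auto
      then show "M (base m + E) = case_option 0 Suc (stop (g (take m w)))"
        using table_layout_take(2)[OF w, of E m] by (simp add: base_def table_entry_def residual_def)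
    qed
    show "M (base (length w)) = case_option 0 Suc (fin (g w))"
      using table_layout_take(2)[OF w, of 0 "length w"] by (simp add: base_def table_entry_def residual_def)
  qed
  then show ?thesis using t(1,2) by blast
qed

end

end

theorem finite_residuals_linear_time:
  fixes g :: "'a list \<Rightarrow> 'b" and enc :: "'a \<Rightarrow> nat" and stop fin :: "'b \<Rightarrow> nat option"
  assumes "finite A" and "inj_on enc A" and "finite (residual g ` lists A)"
  shows "\<exists>P c. \<forall>w\<in>lists A. \<exists>t \<le> c * length w + c.
           halted P (run P (map enc w) t) \<and> scan_result stop fin g w (snd (run P (map enc w) t) 0)"
proof -
  define E where "E = Suc (Suc (Max (insert 0 (enc ` A))))"
  have enc_less: "enc a + 1 < E" if "a \<in> A" for a
    using assms(1) that by (simp add: E_def le_imp_less_Suc)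
  obtain block T where "\<forall>tab :: ('a list \<Rightarrow> 'b) \<Rightarrow> nat \<Rightarrow> nat. \<exists>M. \<forall>s\<in>residual g ` lists A.
      100 \<le> block s \<and> block s + Suc E \<le> 100 + T \<and> (\<forall>j<Suc E. M (block s + j) = tab s j)"
    by (rule finite_table_layout[OF assms(3), where K = "Suc E"])
  then obtain M where M: "\<forall>s\<in>residual g ` lists A. 100 \<le> block s \<and> block s + Suc E \<le> 100 + T \<and>
      (\<forall>j<Suc E. M (block s + j) = table_entry A enc E block stop fin s j)"
    by (elim allE[of _ "table_entry A enc E block stop fin"] exE) (rule that)
  define P where "P = scan_program M T E (block (residual g []))"
  have "\<exists>t \<le> (3 * T + 17) * length w + (3 * T + 17).
      halted P (run P (map enc w) t) \<and> scan_result stop fin g w (snd (run P (map enc w) t) 0)"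
    if "w \<in> lists A" for w
  proof -
    from table_run[OF assms(2) enc_less _ that] M obtain t where "t \<le> 3 * T + 8 * length w + 17"
      "halted P (run P (map enc w) t)" "scan_result stop fin g w (snd (run P (map enc w) t) 0)"
      unfolding P_def by blast
    then show ?thesis by (intro exI[of _ t]) (simp add: add_mult_distrib)
  qed
  then show ?thesis by blast
qed

section \<open>Finding the clean overlap prefix\<close>

definition end_verdict :: "(nat \<Rightarrow> bool) \<Rightarrow> nat option" where
  "end_verdict v = (if \<exists>d. v d then Some (LEAST d. v d) else None)"

lemma no_clean_overlap_prefix:
  assumes "finite R"
    and "\<forall>m. 0 < m \<and> m \<le> length w \<longrightarrow> stop_verdict R (recent_clean_ends R (take m w)) = None"
    and "\<nexists>d. recent_clean_ends R w d"
  shows "\<not> clean_overlap_prefix R w p"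
proof
  assume p: "clean_overlap_prefix R w p"
  then have "take (length p) w = p" by (simp add: clean_overlap_prefix_eq_take[symmetric])
  then have "length p \<le> length w" "clean_overlap_end R w (length p)"
    using arg_cong[of "take (length p) w" p length] p clean_overlap_end_iff[of R w "length p"] by auto
  moreover have "0 < lookahead R" by (simp add: lookahead_def)
  ultimately have "\<not> length p + lookahead R \<le> length w"
    using assms(2) stop_verdict_take_eq_Some[OF assms(1), of "length p + lookahead R" w] by auto
  then have "recent_clean_ends R w (length w - length p)"
    using \<open>length p \<le> length w\<close> \<open>clean_overlap_end R w (length p)\<close>
    by (simp add: recent_clean_ends_def)
  then show False using assms(3) by blast
qed

lemma output_ok_if_scan_result:
  assumes finR: "finite R"
    and result: "scan_result (stop_verdict R) end_verdict (recent_clean_ends R) w out"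
  shows "output_ok R w out"
proof -
  consider (stop) m d where "0 < m" "m \<le> length w" "stop_verdict R (recent_clean_ends R (take m w)) = Some d"
      "out = Suc m - d"
    | (fin) "\<forall>m. 0 < m \<and> m \<le> length w \<longrightarrow> stop_verdict R (recent_clean_ends R (take m w)) = None"
      "out = (case end_verdict (recent_clean_ends R w) of None \<Rightarrow> 0 | Some d \<Rightarrow> Suc (length w) - d)"
    using result unfolding scan_result_def by blast
  then show ?thesis
  proof cases
    case stop
    then have "d = lookahead R" "lookahead R \<le> m" "clean_overlap_end R w (m - lookahead R)"
      using stop_verdict_take_eq_Some[OF finR] by blast+
    then show ?thesis
      using stop(4) clean_overlap_end_iff unfolding output_ok_def by (metis Suc_diff_le)
  next
    case fin
    show ?thesis
    proof (cases "\<exists>d. recent_clean_ends R w d")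
      case True
      define d where "d = (LEAST d. recent_clean_ends R w d)"
      have "recent_clean_ends R w d" unfolding d_def using True by (rule LeastI_ex)
      then have "d \<le> length w" "clean_overlap_prefix R w (take (length w - d) w)"
        by (simp_all add: recent_clean_ends_def clean_overlap_end_iff)
      moreover have "out = Suc (length w - d)"
        using fin(2) True \<open>d \<le> length w\<close> by (simp add: end_verdict_def d_def Suc_diff_le)
      ultimately show ?thesis
        unfolding output_ok_def by auto
    next
      case False
      then show ?thesis
        using no_clean_overlap_prefix[OF finR fin(1)] fin(2) unfolding output_ok_def end_verdict_def by auto
    qed
  qed
qed

theorem lemma6p15:
  fixes A :: "'a set" and R :: "('a list \<times> 'a list) set" and enc :: "'a \<Rightarrow> nat"
  assumes "presentation A R" and "C4 R" and "inj_on enc A"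
  shows "\<exists>(P :: instr list) (c :: nat). \<forall>w \<in> lists A.
           \<exists>t \<le> c * length w + c.
             halted P (run P (map enc w) t) \<and> output_ok R w (snd (run P (map enc w) t) 0)"
proof -
  have "finite A" "finite R" using assms(1) by (simp_all add: presentation_def)
  then obtain P c where "\<forall>w\<in>lists A. \<exists>t \<le> c * length w + c. halted P (run P (map enc w) t) \<and>
      scan_result (stop_verdict R) end_verdict (recent_clean_ends R) w (snd (run P (map enc w) t) 0)"
    using finite_residuals_linear_time[OF _ assms(3) finite_residuals_recent_clean_ends] by blast
  then show ?thesis using output_ok_if_scan_result[OF \<open>finite R\<close>] by blast
qed

end
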